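(* Let $(X,d)$ be a nonempty homogeneous compact metric space of diameter $D$, and let $m$ be a Borel probability measure on $X$ that is invariant under all isometries of $X$. Let $A=\int_{X\times X} d(x,y)\,d(m\times m)(x,y)$ and let $\mu = 1-(m\times m)(\Delta)$, where $\Delta=\{(x,x):x\in X\}$ is the diagonal. Then $$\frac{D}{2}\le A\le \mu D.$$ Furthermore, $\mu=1$ if every point of $X$ has $m$-measure zero, and $\mu=1-\frac1n$ if $X$ is finite with $|X|=n$.
   Context: A metric space is homogeneous if its isometry group acts transitively on its points. The diameter is $D=\sup_{x,y\in X} d(x,y)$. *)

theory Defs
  imports "HOL-Analysis.Analysis" "HOL-Probability.Probability"
begin

definition isometry :: "('a::metric_space \<Rightarrow> 'a) \<Rightarrow> bool" where
  "isometry f \<longleftrightarrow> bij f \<and> (\<forall>x y. dist (f x) (f y) = dist x y)"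

definition homogeneous_space :: "'a::metric_space itself \<Rightarrow> bool" where
  "homogeneous_space _ \<longleftrightarrow> (\<forall>x y::'a. \<exists>f. isometry f \<and> f x = y)"

end

theory Submission
  imports Defs
begin

text \<open>
  Let F(x) be the mean distance from x, the integral of d(x,y) over y with
  respect to m.  An isometry is continuous, hence Borel measurable, and by invariance it
  pushes m forward to m itself; therefore F is invariant under isometries and, by
  homogeneity, F is a constant c.  Fubini's theorem gives A = c.  Integrating the triangle
  inequality d(p,q) \<le> d(p,y) + d(q,y) over y yields d(p,q) \<le> 2c, whence D \<le> 2A.
  The upper bound comes from integrating the pointwise estimate
  d \<le> D (1 - indicator of the diagonal) over m \<times> m.  Fubini also expresses the measure
  of the diagonal as the integral of the point masses m{x}; these vanish in the atomless
  case, and in the finite case homogeneity forces them all to equal 1/n.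

  The one technical point is measurability of the distance for the product sigma-algebra
  borel \<Otimes> borel, which need not contain all Borel sets of X \<times> X.  A compact metric
  space is separable, and d(x,y) is the infimum of d(x,c) + d(c,y) over a countable dense
  set of points c, a countable infimum of measurable functions.
\<close>

section \<open>Measurability of the distance on a compact metric space\<close>

text \<open>A compact subset of a metric space contains a countable dense subset
  (it is totally bounded: take finite 1/(n+1)-nets for all n).\<close>
lemma compact_countable_dense_subset:
  fixes S :: "'a::metric_space set"
  assumes "compact S"
  obtains C where "countable C" "C \<subseteq> S" "\<And>x e. x \<in> S \<Longrightarrow> e > 0 \<Longrightarrow> \<exists>c\<in>C. dist x c < e"
proof -
  have "\<forall>n::nat. \<exists>K. finite K \<and> K \<subseteq> S \<and> S \<subseteq> (\<Union>c\<in>K. ball c (inverse (real (Suc n))))"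
    using seq_compact_imp_totally_bounded[OF compact_imp_seq_compact[OF assms]] by simp
  then obtain K where K: "\<forall>n. finite (K n) \<and> K n \<subseteq> S
      \<and> S \<subseteq> (\<Union>c\<in>K n. ball c (inverse (real (Suc n))))"
    by (rule choice[THEN exE])
  then have K_finite: "finite (K n)" and K_sub: "K n \<subseteq> S"
    and K_net: "S \<subseteq> (\<Union>c\<in>K n. ball c (inverse (real (Suc n))))" for n
    by blast+
  have "\<exists>c\<in>(\<Union>n. K n). dist x c < e" if "x \<in> S" "e > 0" for x e
  proof -
    obtain n where n: "inverse (real (Suc n)) < e"
      using reals_Archimedean[OF \<open>e > 0\<close>] by blast
    obtain c where "c \<in> K n" "dist c x < inverse (real (Suc n))"
      using K_net[of n] \<open>x \<in> S\<close> by auto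
    then have "c \<in> (\<Union>n. K n)" and "dist x c < e"
      using n by (auto simp: dist_commute)
    then show ?thesis by blast
  qed
  moreover have "countable (\<Union>n. K n)"
    using K_finite by (simp add: countable_finite)
  moreover have "(\<Union>n. K n) \<subseteq> S"
    using K_sub by blast
  ultimately show thesis
    using that by blast
qed

lemma dist_eq_INF_dense:
  fixes C :: "'a::metric_space set"
  assumes dense: "\<And>z e. e > 0 \<Longrightarrow> \<exists>c\<in>C. dist z c < e"
  shows "dist x y = (INF c\<in>C. dist x c + dist c y)"
proof (rule antisym)
  have "C \<noteq> {}" using dense[of 1] by auto
  then show "dist x y \<le> (INF c\<in>C. dist x c + dist c y)"
    by (intro cINF_greatest) (auto intro: dist_triangle)
  have bdd: "bdd_below ((\<lambda>c. dist x c + dist c y) ` C)"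
    by (rule bdd_belowI[of _ 0]) auto
  show "(INF c\<in>C. dist x c + dist c y) \<le> dist x y"
  proof (rule field_le_epsilon)
    fix e :: real
    assume "e > 0"
    then obtain c where c: "c \<in> C" "dist y c < e / 2"
      using dense[of "e / 2" y] by auto
    have "(INF c\<in>C. dist x c + dist c y) \<le> dist x c + dist c y"
      by (rule cINF_lower[OF bdd c(1)])
    also have "\<dots> \<le> dist x y + 2 * dist y c"
      using dist_triangle[of x c y] by (simp add: dist_commute)
    finally show "(INF c\<in>C. dist x c + dist c y) \<le> dist x y + e"
      using c(2) by simp
  qed
qed

text \<open>On a compact metric space the distance is measurable for the product of the Borel
  sigma-algebras: it is a countable infimum of sums of continuous functions of one
  coordinate each.\<close>
lemma borel_measurable_dist_pair:
  assumes "compact (UNIV :: 'a::metric_space set)"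
  shows "(\<lambda>(x, y). dist x y) \<in> borel_measurable (borel \<Otimes>\<^sub>M (borel :: 'a measure))"
proof -
  obtain C :: "'a set" where "countable C"
    and dense: "\<And>x e. x \<in> UNIV \<Longrightarrow> e > 0 \<Longrightarrow> \<exists>c\<in>C. dist x c < e"
    by (rule compact_countable_dense_subset[OF assms]) (rule that; assumption)
  have eq: "(\<lambda>(x, y). dist x y) = (\<lambda>p. INF c\<in>C. dist (fst p) c + dist c (snd p :: 'a))"
    unfolding case_prod_beta by (rule ext) (rule dist_eq_INF_dense, rule dense, simp_all)
  have dist_to: "(\<lambda>x::'a. dist x c) \<in> borel_measurable borel" for c
    by (intro borel_measurable_continuous_onI continuous_intros)
  have dist_from: "(\<lambda>x::'a. dist c x) \<in> borel_measurable borel" for c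
    by (intro borel_measurable_continuous_onI continuous_intros)
  have "(\<lambda>p. dist (fst p) c + dist c (snd p :: 'a)) \<in> borel_measurable (borel \<Otimes>\<^sub>M borel)" for c
    using measurable_compose[OF measurable_fst dist_to[of c]]
      measurable_compose[OF measurable_snd dist_from[of c]]
    by (intro borel_measurable_add) (auto simp: o_def)
  then show ?thesis
    unfolding eq by (intro borel_measurable_cINF_real \<open>countable C\<close>)
qed

lemma borel_measurable_dist_pair_measure:
  fixes m :: "'a::metric_space measure"
  assumes "compact (UNIV :: 'a set)" and "sets m = sets borel"
  shows "(\<lambda>(x, y). dist x y) \<in> borel_measurable (m \<Otimes>\<^sub>M m)"
  using borel_measurable_dist_pair[OF assms(1)]
    measurable_cong_sets[OF sets_pair_measure_cong[OF assms(2) assms(2)] refl]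
  by blast

text \<open>Consequently the diagonal, the zero set of the distance, is measurable in m \<Otimes> m.\<close>
lemma diagonal_in_sets_pair_measure:
  fixes m :: "'a::metric_space measure"
  assumes "compact (UNIV :: 'a set)" and "sets m = sets borel"
  shows "{(x, x) | x. True} \<in> sets (m \<Otimes>\<^sub>M m)"
proof -
  have "space (m \<Otimes>\<^sub>M m) = UNIV"
    using sets_eq_imp_space_eq[OF assms(2)] by (simp add: space_pair_measure)
  then have zero_set: "{(x, x) | x. True} = (\<lambda>(x, y). dist x y) -` {0} \<inter> space (m \<Otimes>\<^sub>M m)"
    by auto
  show ?thesis
    unfolding zero_set by (rule measurable_sets[OF borel_measurable_dist_pair_measure[OF assms]]) simp
qed

section \<open>Isometries and the mean distance\<close>

lemma isometry_borel_measurable: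
  assumes "isometry f"
  shows "f \<in> borel_measurable borel"
proof -
  have "dist (f x) (f y) = dist x y" for x y
    using assms unfolding isometry_def by blast
  then have "continuous_on UNIV f"
    unfolding continuous_on_iff by metis
  then show ?thesis by (rule borel_measurable_continuous_onI)
qed

lemma distr_isometry_invariant:
  fixes m :: "'a::metric_space measure"
  assumes f: "isometry f" and sets_m: "sets m = sets borel"
    and invariant: "\<And>A. A \<in> sets m \<Longrightarrow> emeasure m (f -` A) = emeasure m A"
  shows "f \<in> measurable m m" and "distr m m f = m"
proof -
  show f_meas: "f \<in> measurable m m"
    using isometry_borel_measurable[OF f] measurable_cong_sets[OF sets_m sets_m] by blast
  have space_m: "space m = UNIV"
    using sets_eq_imp_space_eq[OF sets_m] by simp
  show "distr m m f = m"
  proof (rule measure_eqI)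
    fix A
    assume "A \<in> sets (distr m m f)"
    then have "A \<in> sets m" by simp
    then show "emeasure (distr m m f) A = emeasure m A"
      using emeasure_distr[OF f_meas] invariant by (simp add: space_m)
  qed simp
qed

lemma borel_measurable_dist_from:
  fixes m :: "'a::metric_space measure"
  assumes "sets m = sets borel"
  shows "(\<lambda>y. dist x y) \<in> borel_measurable m"
proof -
  have "(\<lambda>y. dist x y) \<in> borel_measurable borel"
    by (intro borel_measurable_continuous_onI continuous_intros)
  then show ?thesis
    using measurable_cong_sets[OF assms refl] by blast
qed

definition mean_dist :: "'a::metric_space measure \<Rightarrow> 'a \<Rightarrow> real" where
  "mean_dist m x = (\<integral>y. dist x y \<partial>m)"

lemma mean_dist_isometry:
  fixes m :: "'a::metric_space measure"
  assumes f: "isometry f" and sets_m: "sets m = sets borel"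
    and invariant: "\<And>A. A \<in> sets m \<Longrightarrow> emeasure m (f -` A) = emeasure m A"
  shows "mean_dist m (f x) = mean_dist m x"
proof -
  note f_meas = distr_isometry_invariant(1)[OF assms]
  note distr_eq = distr_isometry_invariant(2)[OF assms]
  have "mean_dist m (f x) = (\<integral>y. dist (f x) y \<partial>(distr m m f))"
    unfolding mean_dist_def by (simp add: distr_eq)
  also have "\<dots> = (\<integral>y. dist (f x) (f y) \<partial>m)"
    by (rule integral_distr[OF f_meas borel_measurable_dist_from[OF sets_m]])
  also have "\<dots> = mean_dist m x"
    using f unfolding isometry_def mean_dist_def by simp
  finally show ?thesis .
qed

lemma mean_dist_homogeneous:
  fixes m :: "'a::metric_space measure"
  assumes homog: "homogeneous_space TYPE('a)" and sets_m: "sets m = sets borel"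
    and invariant: "\<And>f A. isometry f \<Longrightarrow> A \<in> sets m \<Longrightarrow> emeasure m (f -` A) = emeasure m A"
  shows "mean_dist m x = mean_dist m y"
proof -
  obtain f where f: "isometry f" "f y = x"
    using homog unfolding homogeneous_space_def by blast
  have "mean_dist m (f y) = mean_dist m y"
    by (rule mean_dist_isometry[OF f(1) sets_m invariant[OF f(1)]])
  with f(2) show ?thesis by simp
qed

lemma measure_singleton_homogeneous:
  fixes m :: "'a::metric_space measure"
  assumes homog: "homogeneous_space TYPE('a)" and sets_m: "sets m = sets borel"
    and invariant: "\<And>f A. isometry f \<Longrightarrow> A \<in> sets m \<Longrightarrow> emeasure m (f -` A) = emeasure m A"
  shows "measure m {x} = measure m {y}"
proof -
  obtain f where f: "isometry f" "f y = x"
    using homog unfolding homogeneous_space_def by blast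
  have "inj f" using f(1) unfolding isometry_def bij_def by blast
  then have "f -` {x} = {y}" using f(2) by (auto dest: injD)
  moreover have "{x} \<in> sets m" unfolding sets_m by simp
  ultimately show ?thesis
    using invariant[OF f(1), of "{x}"] by (simp add: measure_def)
qed

lemma integrable_dist_bounded:
  fixes m :: "'a::metric_space measure"
  assumes "finite_measure m" and sets_m: "sets m = sets borel" and "bounded (UNIV :: 'a set)"
  shows "integrable m (\<lambda>y. dist x y)"
proof -
  have "(\<lambda>y. dist x y) \<in> borel_measurable m"
    by (rule borel_measurable_dist_from[OF sets_m])
  moreover have "dist x y \<le> diameter (UNIV :: 'a set)" for y
    using diameter_bounded_bound[OF assms(3)] by blast
  ultimately show ?thesis
    by (intro finite_measure.integrable_const_bound[OF assms(1), where B = "diameter UNIV"]) auto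
qed

text \<open>The triangle inequality, averaged over the intermediate point.\<close>
lemma dist_le_mean_dist:
  fixes m :: "'a::metric_space measure"
  assumes "prob_space m" and "sets m = sets borel" and "bounded (UNIV :: 'a set)"
  shows "dist p q \<le> mean_dist m p + mean_dist m q"
proof -
  interpret prob_space m by (rule assms(1))
  note integrable = integrable_dist_bounded[OF finite_measure_axioms assms(2,3)]
  have "dist p q = (\<integral>y. dist p q \<partial>m)"
    using prob_space by simp
  also have "\<dots> \<le> (\<integral>y. dist p y + dist q y \<partial>m)"
    by (rule integral_mono) (auto intro: integrable dist_triangle2)
  also have "\<dots> = mean_dist m p + mean_dist m q"
    unfolding mean_dist_def by (rule Bochner_Integration.integral_add[OF integrable integrable])
  finally show ?thesis .
qed

lemma diameter_le_twice_mean_dist: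
  fixes m :: "'a::metric_space measure"
  assumes "prob_space m" and "sets m = sets borel" and "bounded (UNIV :: 'a set)"
    and const: "\<And>x. mean_dist m x = c"
  shows "diameter (UNIV :: 'a set) \<le> 2 * c"
proof -
  have "dist x y \<le> 2 * c" for x y :: 'a
    using dist_le_mean_dist[OF assms(1-3), of x y] const by simp
  then have "(SUP (x, y)\<in>UNIV \<times> UNIV. dist x (y :: 'a)) \<le> 2 * c"
    by (intro cSUP_least) auto
  then show ?thesis
    by (simp add: diameter_def)
qed

lemma integrable_pair_dist:
  fixes m :: "'a::metric_space measure"
  assumes "prob_space m" and "sets m = sets borel" and "compact (UNIV :: 'a set)"
  shows "integrable (m \<Otimes>\<^sub>M m) (\<lambda>(x, y). dist x y)"
proof -
  interpret P: pair_prob_space m m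
    using assms(1) by (simp add: pair_prob_space_def pair_sigma_finite_def prob_space_imp_sigma_finite)
  have "norm ((\<lambda>(x, y). dist x y) p) \<le> diameter (UNIV :: 'a set)" for p :: "'a \<times> 'a"
    using diameter_bounded_bound[OF compact_imp_bounded[OF assms(3)]] by (cases p) auto
  then have "AE p in m \<Otimes>\<^sub>M m. norm ((\<lambda>(x, y). dist x y) p) \<le> diameter (UNIV :: 'a set)"
    by (intro AE_I2) blast
  then show ?thesis
    by (rule P.integrable_const_bound[OF _ borel_measurable_dist_pair_measure[OF assms(3,2)]])
qed

lemma integral_pair_dist_eq_mean_dist:
  fixes m :: "'a::metric_space measure"
  assumes "prob_space m" and "sets m = sets borel" and "compact (UNIV :: 'a set)"
    and const: "\<And>x. mean_dist m x = c"
  shows "(\<integral>p. (\<lambda>(x, y). dist x y) p \<partial>(m \<Otimes>\<^sub>M m)) = c"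
proof -
  interpret P: pair_prob_space m m
    using assms(1) by (simp add: pair_prob_space_def pair_sigma_finite_def prob_space_imp_sigma_finite)
  have "(\<integral>p. (\<lambda>(x, y). dist x y) p \<partial>(m \<Otimes>\<^sub>M m))
      = (\<integral>x. (\<integral>y. (\<lambda>(x, y). dist x y) (x, y) \<partial>m) \<partial>m)"
    by (rule P.integral_fst'[OF integrable_pair_dist[OF assms(1-3)], symmetric])
  also have "\<dots> = (\<integral>x. mean_dist m x \<partial>m)"
    by (simp add: mean_dist_def)
  also have "\<dots> = c"
    using const prob_space.prob_space[OF assms(1)] by simp
  finally show ?thesis .
qed

text \<open>Off the diagonal the distance is at most the diameter, and on it the distance is 0;
  integrating bounds the mean distance by the diameter times the mass off the diagonal.\<close>
lemma integral_pair_dist_le_off_diagonal: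
  fixes m :: "'a::metric_space measure"
  assumes "prob_space m" and "sets m = sets borel" and "compact (UNIV :: 'a set)"
  defines "\<Delta> \<equiv> {(x, x) | x. True}"
  shows "(\<integral>p. (\<lambda>(x, y). dist x y) p \<partial>(m \<Otimes>\<^sub>M m))
    \<le> (1 - measure (m \<Otimes>\<^sub>M m) \<Delta>) * diameter (UNIV :: 'a set)"
proof -
  interpret P: pair_prob_space m m
    using assms(1) by (simp add: pair_prob_space_def pair_sigma_finite_def prob_space_imp_sigma_finite)
  let ?D = "diameter (UNIV :: 'a set)"
  have \<Delta>_sets: "\<Delta> \<in> sets (m \<Otimes>\<^sub>M m)"
    unfolding \<Delta>_def by (rule diagonal_in_sets_pair_measure[OF assms(3,2)])
  have space_P: "space (m \<Otimes>\<^sub>M m) = UNIV"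
    using sets_eq_imp_space_eq[OF assms(2)] by (simp add: space_pair_measure)
  have dist_le: "dist x y \<le> ?D" for x y :: 'a
    using diameter_bounded_bound[OF compact_imp_bounded[OF assms(3)]] by blast
  have pointwise: "(\<lambda>(x, y). dist x y) p \<le> ?D - ?D * indicator \<Delta> p" for p :: "'a \<times> 'a"
    using dist_le by (cases p) (auto simp: indicator_def \<Delta>_def)
  have int_ind: "integrable (m \<Otimes>\<^sub>M m) (indicator \<Delta> :: 'a \<times> 'a \<Rightarrow> real)"
    using \<Delta>_sets by (simp add: P.emeasure_finite less_top[symmetric])
  have "(\<integral>p. (\<lambda>(x, y). dist x y) p \<partial>(m \<Otimes>\<^sub>M m)) \<le> (\<integral>p. ?D - ?D * indicator \<Delta> p \<partial>(m \<Otimes>\<^sub>M m))"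
    using integrable_pair_dist[OF assms(1-3)] int_ind pointwise by (intro integral_mono) simp_all
  also have "\<dots> = ?D - ?D * measure (m \<Otimes>\<^sub>M m) \<Delta>"
    using int_ind \<Delta>_sets P.prob_space by (simp add: space_P)
  finally show ?thesis by (simp add: algebra_simps)
qed

section \<open>The measure of the diagonal\<close>

lemma emeasure_diagonal:
  fixes m :: "'a measure"
  assumes "sigma_finite_measure m" and "{(x, x) | x. True} \<in> sets (m \<Otimes>\<^sub>M m)"
  shows "emeasure (m \<Otimes>\<^sub>M m) {(x, x) | x. True} = (\<integral>\<^sup>+x. emeasure m {x} \<partial>m)"
proof -
  have "emeasure (m \<Otimes>\<^sub>M m) {(x, x) | x. True} = (\<integral>\<^sup>+x. emeasure m (Pair x -` {(x, x) | x. True}) \<partial>m)"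
    by (rule sigma_finite_measure.emeasure_pair_measure_alt[OF assms])
  also have "\<dots> = (\<integral>\<^sup>+x. emeasure m {x} \<partial>m)"
    by (rule nn_integral_cong) auto
  finally show ?thesis .
qed

lemma measure_diagonal_uniform:
  fixes m :: "'a measure"
  assumes "prob_space m" and "{(x, x) | x. True} \<in> sets (m \<Otimes>\<^sub>M m)"
    and const: "\<And>x. measure m {x} = a"
  shows "measure (m \<Otimes>\<^sub>M m) {(x, x) | x. True} = a"
proof -
  interpret prob_space m by (rule assms(1))
  have "emeasure m {x} = ennreal a" for x
    using const emeasure_eq_measure by simp
  then have "emeasure (m \<Otimes>\<^sub>M m) {(x, x) | x. True} = ennreal a"
    using emeasure_diagonal[OF prob_space_imp_sigma_finite[OF assms(1)] assms(2)] emeasure_space_1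
    by simp
  moreover have "0 \<le> a" using measure_nonneg[of m "{undefined}"] const[of undefined] by simp
  ultimately show ?thesis by (simp add: measure_def)
qed

lemma measure_singleton_uniform:
  fixes m :: "'a::metric_space measure"
  assumes "prob_space m" and "sets m = sets borel" and "finite (UNIV :: 'a set)"
    and const: "\<And>x. measure m {x} = a"
  shows "a = 1 / real (card (UNIV :: 'a set))"
proof -
  interpret prob_space m by (rule assms(1))
  have "1 = measure m UNIV"
    using prob_space sets_eq_imp_space_eq[OF assms(2)] by simp
  also have "\<dots> = (\<Sum>x\<in>UNIV. measure m {x})"
    by (rule finite_measure_eq_sum_singleton[OF assms(3)]) (simp add: assms(2))
  also have "\<dots> = real (card (UNIV :: 'a set)) * a"
    by (simp add: const)
  finally show ?thesis
    by (metis mult_eq_0_iff nonzero_mult_div_cancel_left zero_neq_one)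
qed

theorem theorem1p2:
  fixes m :: "'a::metric_space measure"
  assumes compact: "compact (UNIV :: 'a set)"
    and homog: "homogeneous_space TYPE('a)"
    and prob: "prob_space m"
    and borel: "sets m = sets borel"
    and invariant: "\<And>f A. isometry f \<Longrightarrow> A \<in> sets m \<Longrightarrow> emeasure m (f -` A) = emeasure m A"
  defines "D \<equiv> diameter (UNIV :: 'a set)"
    and "A \<equiv> integral\<^sup>L (m \<Otimes>\<^sub>M m) (\<lambda>(x, y). dist x y)"
    and "\<mu> \<equiv> 1 - measure (m \<Otimes>\<^sub>M m) {(x, x) | x. True}"
  shows "(D / 2 \<le> A \<and> A \<le> \<mu> * D)
    \<and> ((\<forall>x. measure m {x} = 0) \<longrightarrow> \<mu> = 1)
    \<and> (finite (UNIV :: 'a set) \<longrightarrow> \<mu> = 1 - 1 / real (card (UNIV :: 'a set)))"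
proof -
  define c where "c = mean_dist m undefined"
  have const: "mean_dist m x = c" for x
    unfolding c_def by (rule mean_dist_homogeneous[OF homog borel invariant])
  note \<Delta>_sets = diagonal_in_sets_pair_measure[OF compact borel]
  have "A = c"
    unfolding A_def by (rule integral_pair_dist_eq_mean_dist[OF prob borel compact const])
  moreover have "D \<le> 2 * c"
    unfolding D_def by (rule diameter_le_twice_mean_dist[OF prob borel compact_imp_bounded[OF compact] const])
  moreover have "A \<le> \<mu> * D"
    unfolding A_def \<mu>_def D_def by (rule integral_pair_dist_le_off_diagonal[OF prob borel compact])
  moreover have "\<mu> = 1" if "\<forall>x. measure m {x} = 0"
    using measure_diagonal_uniform[OF prob \<Delta>_sets, of 0] that unfolding \<mu>_def by simp
  moreover have "\<mu> = 1 - 1 / real (card (UNIV :: 'a set))" if "finite (UNIV :: 'a set)"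
  proof -
    define a where "a = measure m {undefined}"
    have mass: "measure m {x} = a" for x
      unfolding a_def by (rule measure_singleton_homogeneous[OF homog borel invariant])
    show ?thesis
      using measure_diagonal_uniform[OF prob \<Delta>_sets mass]
        measure_singleton_uniform[OF prob borel that mass]
      unfolding \<mu>_def by simp
  qed
  ultimately show ?thesis by auto
qed

end
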